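(* Let $A_t$, $t\in I$ ($I$ an interval containing $0$), solve the ODE $\dot A_t=A_t[A_t,A_t^*]$ in $\mathfrak{gl}_n(\mathbb C)$. Then $\operatorname{spec}A_t=\operatorname{spec}A_0$ for all $t\in I$.
   Context: $A^*$ is the conjugate transpose, $[X,Y]=XY-YX$, and $\operatorname{spec}$ denotes the set of eigenvalues (the proof in fact gives equality of characteristic polynomials). *)

theory Defs
  imports "HOL-Analysis.Analysis"
begin

definition conj_transpose :: "complex^'n^'n \<Rightarrow> complex^'n^'n" where
  "conj_transpose A = (\<chi> i j. cnj (A $ j $ i))"

definition commutator :: "complex^'n^'n \<Rightarrow> complex^'n^'n \<Rightarrow> complex^'n^'n" where
  "commutator X Y = X ** Y - Y ** X"

definition spec :: "complex^'n^'n \<Rightarrow> complex set" where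
  "spec A = {c. \<exists>v. v \<noteq> 0 \<and> A *v v = c *s v}"

end

theory Submission
  imports Defs
begin

text \<open>
  For every c \<in> \<complex>, the matrix M = A - c I satisfies a Lax-type equation
  M' = A [A, A^*] = [M, A A^*], because c I commutes with everything.
  By Jacobi's formula the derivative of det M along a commutator
  M X - X M is tr X det M - tr X det M = 0, so the characteristic polynomial
  det (A - c I) does not depend on t, and neither do its roots.
\<close>

lemma mat_mult_commute: "mat c ** X = X ** (mat c :: 'a::comm_semiring_1^'n^'n)"
  apply (vector matrix_matrix_mult_def mat_def)
  apply (simp add: if_distrib if_distribR mult.commute cong del: if_weak_cong)
  done

lemma mat_mult_vector: "mat c *v v = c *s (v :: 'a::semiring_1^'n)"
  apply (vector matrix_vector_mult_def mat_def)
  apply (simp add: if_distrib if_distribR cong del: if_weak_cong)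
  done

lemma matrix_diff_ldistrib: "A ** (B - C) = A ** B - A ** (C :: 'a::ring_1^'n^'m)"
  by (simp add: vec_eq_iff matrix_matrix_mult_def algebra_simps sum_subtractf)

lemma matrix_diff_rdistrib: "(B - C) ** A = B ** A - C ** (A :: 'a::ring_1^'n^'m)"
  by (simp add: vec_eq_iff matrix_matrix_mult_def algebra_simps sum_subtractf)

lemma commutator_diff_mat:
  "(A - mat c) ** X - X ** (A - mat c) = A ** X - X ** (A :: 'a::comm_ring_1^'n^'n)"
  by (simp add: matrix_diff_ldistrib matrix_diff_rdistrib mat_mult_commute)

lemma spec_iff_det: "c \<in> spec A \<longleftrightarrow> det (A - mat c) = 0"
proof -
  have "det (A - mat c) \<noteq> 0 \<longleftrightarrow> inj ((*v) (A - mat c))"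
    using det_nz_iff_inj_gen[of "(*v) (A - mat c)"] by simp
  also have "\<dots> \<longleftrightarrow> (\<forall>v. (A - mat c) *v v = 0 \<longrightarrow> v = 0)"
    by (simp add: vec.inj_iff_eq_0)
  also have "\<dots> \<longleftrightarrow> c \<notin> spec A"
    by (auto simp: spec_def matrix_vector_mult_diff_rdistrib mat_mult_vector)
  finally show ?thesis by blast
qed

definition det_derivative :: "'a::comm_ring_1^'n^'n \<Rightarrow> 'a^'n^'n \<Rightarrow> 'a" where
  "det_derivative P H = (\<Sum>k\<in>UNIV. det (\<chi> i. if i = k then H $ i else P $ i))"

lemma det_derivative_eq_sum_permutations:
  fixes P H :: "'a::comm_ring_1^'n^'n"
  shows "det_derivative P H = (\<Sum>p\<in>{p. p permutes UNIV}. of_int (sign p) *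
      (\<Sum>k\<in>UNIV. H $ k $ p k * (\<Prod>i\<in>UNIV - {k}. P $ i $ p i)))"
proof -
  have "(\<Prod>i\<in>UNIV. (\<chi> i. if i = k then H $ i else P $ i) $ i $ p i)
      = H $ k $ p k * (\<Prod>i\<in>UNIV - {k}. P $ i $ p i)" for k :: 'n and p :: "'n \<Rightarrow> 'n"
    by (subst prod.remove[of UNIV k]) (auto intro!: prod.cong)
  then show ?thesis
    unfolding det_derivative_def det_def
    by (simp add: sum_distrib_left sum.swap[of _ UNIV])
qed

lemma det_derivative_diff:
  "det_derivative P (H1 - H2) = det_derivative P H1 - det_derivative P H2"
  unfolding det_derivative_eq_sum_permutations
  by (simp add: algebra_simps sum_subtractf)

lemma has_vector_derivative_det:
  fixes M :: "real \<Rightarrow> 'a::real_normed_field^'n^'n"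
  assumes "(M has_vector_derivative H) (at t within S)"
  shows "((\<lambda>t. det (M t)) has_vector_derivative det_derivative (M t) H) (at t within S)"
proof -
  have entry: "((\<lambda>t. M t $ i $ j) has_derivative (\<lambda>s. s *\<^sub>R H $ i $ j)) (at t within S)"
    for i j
    using bounded_linear.has_vector_derivative[OF
        bounded_linear_compose[OF bounded_linear_vec_nth bounded_linear_vec_nth] assms]
    by (simp add: has_vector_derivative_def)
  have "((\<lambda>t. \<Prod>i\<in>UNIV. M t $ i $ p i) has_vector_derivative
      (\<Sum>k\<in>UNIV. H $ k $ p k * (\<Prod>i\<in>UNIV - {k}. M t $ i $ p i))) (at t within S)"
    for p :: "'n \<Rightarrow> 'n"
    unfolding has_vector_derivative_def
    by (rule has_derivative_eq_rhs[OF has_derivative_prod[OF entry]])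
      (simp add: fun_eq_iff scaleR_sum_right)
  then show ?thesis
    unfolding det_def det_derivative_eq_sum_permutations
    by (intro has_vector_derivative_sum has_vector_derivative_mult_right)
qed

text \<open>
  Replacing row k of P by row k of X P adds a combination of the other rows of P
  to X_kk times row k, which does not change the determinant.
\<close>
lemma det_replace_row_mult_left:
  "det (\<chi> i. if i = k then (X ** P) $ i else P $ i) = X $ k $ k * det (P :: 'a::field^'n^'n)"
proof -
  define P' :: "'a^'n^'n" where "P' = (\<chi> i. if i = k then X $ k $ k *s P $ i else P $ i)"
  define x where "x = (\<Sum>j\<in>UNIV - {k}. X $ k $ j *s P $ j)"
  have row_P': "row j P' = (if j = k then X $ k $ k *s P $ j else P $ j)" for j
    by (simp add: row_def P'_def vec_eq_iff)
  have det_P': "det P' = X $ k $ k * det P"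
    unfolding P'_def using det_row_mul[of k "X $ k $ k" "\<lambda>i. P $ i" "\<lambda>i. P $ i"] by simp
  have x_span: "x \<in> vec.span {row j P' |j. j \<noteq> k}"
    unfolding x_def
    by (intro vec.span_sum vec.span_scale vec.span_base) (auto simp: row_P')
  have "(X ** P) $ k = (\<Sum>j\<in>UNIV. X $ k $ j *s P $ j)"
    by (simp add: vec_eq_iff matrix_matrix_mult_def)
  also have "\<dots> = X $ k $ k *s P $ k + x"
    unfolding x_def by (subst sum.remove[of UNIV k]) auto
  finally have "(\<chi> i. if i = k then (X ** P) $ i else P $ i)
      = (\<chi> i. if i = k then row k P' + x else row i P')"
    by (auto simp: vec_eq_iff row_P')
  then show ?thesis
    using det_row_span[OF x_span] det_P' by simp
qed

lemma det_derivative_mult_left: "det_derivative P (X ** P) = trace X * det (P :: 'a::field^'n^'n)"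
  unfolding det_derivative_def det_replace_row_mult_left trace_def
  by (simp add: sum_distrib_right)

text \<open>Both sides are the derivative at 0 of s \<mapsto> det (P + s H) = det (P^T + s H^T).\<close>
lemma det_derivative_transpose:
  "det_derivative (transpose P) (transpose H) = det_derivative P (H :: 'a::real_normed_field^'n^'n)"
proof -
  have "transpose (P + s *\<^sub>R H) = transpose P + s *\<^sub>R transpose H" for s
    by (simp add: transpose_def vec_eq_iff)
  then have same_det: "det (transpose P + s *\<^sub>R transpose H) = det (P + s *\<^sub>R H)" for s
    by (metis det_transpose)
  have "((\<lambda>s. P + s *\<^sub>R H) has_vector_derivative H) (at 0)"
    and "((\<lambda>s. transpose P + s *\<^sub>R transpose H) has_vector_derivative transpose H) (at 0)"
    by (auto intro!: derivative_eq_intros)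
  from this[THEN has_vector_derivative_det] show ?thesis
    unfolding same_det by (simp add: vector_derivative_unique_at)
qed

lemma det_derivative_mult_right:
  "det_derivative P (P ** X) = trace X * det (P :: 'a::real_normed_field^'n^'n)"
proof -
  have "trace (transpose X) = trace X"
    by (simp add: trace_def transpose_def)
  then show ?thesis
    by (metis det_derivative_transpose det_derivative_mult_left det_transpose
        matrix_transpose_mul)
qed

lemma det_derivative_commutator: "det_derivative P (P ** X - X ** P) = 0"
  for P :: "'a::real_normed_field^'n^'n"
  by (simp add: det_derivative_diff det_derivative_mult_left det_derivative_mult_right)

lemma det_constant_if_derivative_commutator:
  fixes M X :: "real \<Rightarrow> 'a::real_normed_field^'n^'n"
  assumes "convex S"
    and "\<And>t. t \<in> S \<Longrightarrow> (M has_vector_derivative M t ** X t - X t ** M t) (at t within S)"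
    and "s \<in> S" "t \<in> S"
  shows "det (M s) = det (M t)"
proof -
  have "((\<lambda>t. det (M t)) has_vector_derivative 0) (at t within S)" if "t \<in> S" for t
    using has_vector_derivative_det[OF assms(2)[OF that]] by (simp add: det_derivative_commutator)
  with has_vector_derivative_zero_constant[OF \<open>convex S\<close>] assms(3,4) show ?thesis
    by metis
qed

theorem lemma4p3:
  fixes A :: "real \<Rightarrow> complex^'n^'n" and I :: "real set"
  assumes "is_interval I" and "0 \<in> I"
    and "\<And>t. t \<in> I \<Longrightarrow>
           (A has_vector_derivative (A t ** commutator (A t) (conj_transpose (A t)))) (at t within I)"
  shows "\<forall>t\<in>I. spec (A t) = spec (A 0)"
proof -
  define X where "X t = A t ** conj_transpose (A t)" for t
  have "det (A t - mat c) = det (A 0 - mat c)" if "t \<in> I" for t c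
  proof (rule det_constant_if_derivative_commutator[where X = X])
    fix s assume "s \<in> I"
    have "A s ** commutator (A s) (conj_transpose (A s)) = A s ** X s - X s ** A s"
      by (simp add: X_def commutator_def matrix_diff_ldistrib matrix_mul_assoc)
    also have "\<dots> = (A s - mat c) ** X s - X s ** (A s - mat c)"
      by (rule commutator_diff_mat[symmetric])
    finally have "A s ** commutator (A s) (conj_transpose (A s))
        = (A s - mat c) ** X s - X s ** (A s - mat c)" .
    with assms(3)[OF \<open>s \<in> I\<close>]
    show "((\<lambda>t. A t - mat c) has_vector_derivative
        (A s - mat c) ** X s - X s ** (A s - mat c)) (at s within I)"
      by (auto intro!: derivative_eq_intros)
  qed (use assms(1,2) that is_interval_convex in auto)
  then show ?thesis
    by (auto simp: spec_iff_det)
qed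

end
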